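(* Let $Z$ be a domain, $\pi$ a probability distribution on $Z$, $0\le a\le b$, $\mathcal{F}$ a family of functions from $Z$ to $[a,b]$, $p\in(0,1)$ and $n\ge1$. The function $g:Z^n\to\mathbb{R}$, $g(X_1,\dots,X_n)=\mathsf{r}\mathsf{R}(\mathcal{F},\{X_1,\dots,X_n\},p)$, satisfies the bounded difference inequality with constants $c_i=\frac{|b-a|}{np}$, $1\le i\le n$.
   Context: For $\sigma_1,\dots,\sigma_n$ independent Rademacher random variables (each $\pm1$ with probability $1/2$), $\mathsf{r}\mathsf{R}(\mathcal{F},\{X_1,\dots,X_n\},p)=\mathbb{E}_\sigma\left[\sup_{f\in\mathcal{F}}\frac{1}{n\max\{p,\mathbb{E}_\pi[f]\}}\sum_{i=1}^n\sigma_if(X_i)\right]$, expectation over the $\sigma_i$ only. A function $g:\mathcal{X}^n\to\mathbb{R}$ satisfies the bounded difference inequality with nonnegative constants $c_1,\dots,c_n$ if for every $i$, $\sup_{x_1,\dots,x_n,x_i'\in\mathcal{X}}|g(x_1,\dots,x_n)-g(x_1,\dots,x_{i-1},x_i',x_{i+1},\dots,x_n)|\le c_i$. *)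

theory Defs
  imports "HOL-Probability.Probability"
begin

definition sign_vectors :: "nat \<Rightarrow> (nat \<Rightarrow> real) set" where
  "sign_vectors n = PiE {..<n} (\<lambda>_. {-1, 1})"

text \<open>Relative Rademacher complexity rR(F, {X_1..X_n}, p); the sample is X 0, ..., X (n-1),
  E_pi[f] is the Lebesgue integral w.r.t. pi, and the expectation over sigma is the
  uniform average over all 2^n sign vectors.\<close>
definition rR :: "('a \<Rightarrow> real) set \<Rightarrow> 'a measure \<Rightarrow> nat \<Rightarrow> (nat \<Rightarrow> 'a) \<Rightarrow> real \<Rightarrow> real" where
  "rR F \<pi> n X p =
     (\<Sum>\<sigma>\<in>sign_vectors n.
        (SUP f\<in>F. (\<Sum>i<n. \<sigma> i * f (X i)) / (real n * max p (integral\<^sup>L \<pi> f))))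
     / 2 ^ n"

definition bounded_difference :: "'a set \<Rightarrow> nat \<Rightarrow> ((nat \<Rightarrow> 'a) \<Rightarrow> real) \<Rightarrow> (nat \<Rightarrow> real) \<Rightarrow> bool" where
  "bounded_difference Z n g c \<longleftrightarrow>
     (\<forall>i<n. \<forall>x x'. (\<forall>j<n. x j \<in> Z) \<longrightarrow> x' \<in> Z \<longrightarrow> \<bar>g x - g (x(i := x'))\<bar> \<le> c i)"

end

theory Submission
  imports Defs
begin

text \<open>Changing one sample point changes every Rademacher correlation
  \<open>\<Sum>k. \<sigma>\<^sub>k f(X\<^sub>k)\<close> by at most \<open>\<bar>b - a\<bar>\<close>, while the normaliser
  \<open>n \<cdot> max p E\<^sub>\<pi>[f]\<close> is at least \<open>n p\<close>; so each normalised correlation moves by at most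
  \<open>\<bar>b - a\<bar>/(n p)\<close>. Taking suprema over \<open>F\<close> and averaging over \<open>\<sigma>\<close> are both
  1-Lipschitz in the sup norm, so the same bound holds for \<open>rR\<close>.\<close>

lemma abs_cSUP_diff_le:
  fixes u v :: "'b \<Rightarrow> real"
  assumes "bdd_above (u ` F)" and "bdd_above (v ` F)" and "0 \<le> c"
    and diff: "\<And>f. f \<in> F \<Longrightarrow> \<bar>u f - v f\<bar> \<le> c"
  shows "\<bar>(SUP f\<in>F. u f) - (SUP f\<in>F. v f)\<bar> \<le> c"
proof (cases "F = {}")
  case True
  then show ?thesis using \<open>0 \<le> c\<close> by simp
next
  case False
  have "(SUP f\<in>F. u f) \<le> (SUP f\<in>F. v f) + c"
  proof (rule cSUP_least[OF False])
    fix f assume "f \<in> F"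
    then show "u f \<le> (SUP f\<in>F. v f) + c"
      using diff[of f] cSUP_upper[OF _ assms(2)] by fastforce
  qed
  moreover have "(SUP f\<in>F. v f) \<le> (SUP f\<in>F. u f) + c"
  proof (rule cSUP_least[OF False])
    fix f assume "f \<in> F"
    then show "v f \<le> (SUP f\<in>F. u f) + c"
      using diff[of f] cSUP_upper[OF _ assms(1)] by fastforce
  qed
  ultimately show ?thesis by linarith
qed

lemma abs_average_diff_le:
  fixes u v :: "'b \<Rightarrow> real"
  assumes "\<And>s. s \<in> S \<Longrightarrow> \<bar>u s - v s\<bar> \<le> c" and "0 \<le> c"
  shows "\<bar>(\<Sum>s\<in>S. u s) / card S - (\<Sum>s\<in>S. v s) / card S\<bar> \<le> c"
proof -
  have "\<bar>(\<Sum>s\<in>S. u s) / card S - (\<Sum>s\<in>S. v s) / card S\<bar> = \<bar>\<Sum>s\<in>S. u s - v s\<bar> / card S"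
    by (simp only: sum_subtractf diff_divide_distrib[symmetric] abs_divide abs_of_nat)
  also have "\<dots> \<le> (\<Sum>s\<in>S. \<bar>u s - v s\<bar>) / card S"
    by (intro divide_right_mono sum_abs) simp
  also have "\<dots> \<le> (\<Sum>s\<in>S. c) / card S"
    by (intro divide_right_mono sum_mono assms(1)) simp_all
  also have "\<dots> \<le> c"
    using \<open>0 \<le> c\<close> by (cases "card S = 0") simp_all
  finally show ?thesis .
qed

lemma sum_fun_upd_diff:
  fixes h :: "nat \<Rightarrow> 'b \<Rightarrow> 'c :: ab_group_add"
  assumes "i < n"
  shows "(\<Sum>k<n. h k (x k)) - (\<Sum>k<n. h k ((x(i := y)) k)) = h i (x i) - h i y"
proof -
  have "(\<Sum>k\<in>{..<n} - {i}. h k (x k)) = (\<Sum>k\<in>{..<n} - {i}. h k ((x(i := y)) k))"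
    by (rule sum.cong) auto
  then show ?thesis
    using assms by (simp add: sum.remove[of "{..<n}" i])
qed

lemma card_sign_vectors: "card (sign_vectors n) = 2 ^ n"
  unfolding sign_vectors_def by (simp add: card_PiE numeral_2_eq_2)

lemma abs_sign_vector:
  assumes "\<sigma> \<in> sign_vectors n" and "k < n"
  shows "\<bar>\<sigma> k\<bar> = 1"
proof -
  have "\<sigma> k \<in> {-1, 1}"
    using assms unfolding sign_vectors_def by (auto dest: PiE_mem)
  then show ?thesis by auto
qed

definition rel_correlation ::
    "'a measure \<Rightarrow> nat \<Rightarrow> (nat \<Rightarrow> 'a) \<Rightarrow> real \<Rightarrow> (nat \<Rightarrow> real) \<Rightarrow> ('a \<Rightarrow> real) \<Rightarrow> real" where
  "rel_correlation \<pi> n X p \<sigma> f = (\<Sum>k<n. \<sigma> k * f (X k)) / (real n * max p (integral\<^sup>L \<pi> f))"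

lemma rR_eq_average:
  "rR F \<pi> n X p =
     (\<Sum>\<sigma>\<in>sign_vectors n. SUP f\<in>F. rel_correlation \<pi> n X p \<sigma> f) / card (sign_vectors n)"
  unfolding rR_def rel_correlation_def card_sign_vectors by simp

lemma rel_correlation_denominator_ge:
  "real n * p \<le> real n * max p (integral\<^sup>L \<pi> f)"
  by (intro mult_left_mono) auto

lemma abs_rel_correlation_le:
  assumes "0 < n" and "0 < p"
    and "\<And>k. k < n \<Longrightarrow> \<bar>\<sigma> k\<bar> \<le> 1" and "\<And>k. k < n \<Longrightarrow> \<bar>f (X k)\<bar> \<le> B"
  shows "\<bar>rel_correlation \<pi> n X p \<sigma> f\<bar> \<le> B / p"
proof -
  have "\<bar>\<Sum>k<n. \<sigma> k * f (X k)\<bar> \<le> (\<Sum>k<n. \<bar>\<sigma> k * f (X k)\<bar>)"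
    by (rule sum_abs)
  also have "\<dots> = (\<Sum>k<n. \<bar>\<sigma> k\<bar> * \<bar>f (X k)\<bar>)"
    by (simp add: abs_mult)
  also have "\<dots> \<le> (\<Sum>k<n. 1 * B)"
    using assms(3,4) by (intro sum_mono mult_mono) auto
  finally have "\<bar>\<Sum>k<n. \<sigma> k * f (X k)\<bar> \<le> real n * B" by simp
  then have "\<bar>rel_correlation \<pi> n X p \<sigma> f\<bar> \<le> (real n * B) / (real n * p)"
    unfolding rel_correlation_def abs_divide
    using assms(1,2) rel_correlation_denominator_ge[of n p \<pi> f]
    by (intro frac_le) auto
  then show ?thesis
    using assms(1) by simp
qed

lemma abs_rel_correlation_upd_diff_le:
  assumes "i < n" and "0 < p" and "\<bar>\<sigma> i\<bar> \<le> 1" and "\<bar>f (X i) - f y\<bar> \<le> d"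
  shows "\<bar>rel_correlation \<pi> n X p \<sigma> f - rel_correlation \<pi> n (X(i := y)) p \<sigma> f\<bar>
           \<le> d / (real n * p)"
proof -
  have "(\<Sum>k<n. \<sigma> k * f (X k)) - (\<Sum>k<n. \<sigma> k * f ((X(i := y)) k))
          = \<sigma> i * (f (X i) - f y)"
    using sum_fun_upd_diff[OF assms(1), of "\<lambda>k z. \<sigma> k * f z" X y]
    by (simp only: right_diff_distrib)
  then have "rel_correlation \<pi> n X p \<sigma> f - rel_correlation \<pi> n (X(i := y)) p \<sigma> f
               = \<sigma> i * (f (X i) - f y) / (real n * max p (integral\<^sup>L \<pi> f))"
    unfolding rel_correlation_def diff_divide_distrib[symmetric] by (rule arg_cong)
  moreover have "0 < real n * max p (integral\<^sup>L \<pi> f)"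
    using assms(1,2) by simp
  ultimately have "\<bar>rel_correlation \<pi> n X p \<sigma> f - rel_correlation \<pi> n (X(i := y)) p \<sigma> f\<bar>
          = \<bar>\<sigma> i * (f (X i) - f y)\<bar> / (real n * max p (integral\<^sup>L \<pi> f))"
    by (simp only: abs_divide)
  also have "\<dots> \<le> d / (real n * p)"
  proof (rule frac_le)
    have "\<bar>\<sigma> i\<bar> * \<bar>f (X i) - f y\<bar> \<le> 1 * d"
      using assms(3,4) by (intro mult_mono) auto
    then show "\<bar>\<sigma> i * (f (X i) - f y)\<bar> \<le> d"
      by (simp add: abs_mult)
    show "0 < real n * p" "real n * p \<le> real n * max p (integral\<^sup>L \<pi> f)"
      using assms(1,2) rel_correlation_denominator_ge by auto
  qed (use assms(4) in auto)
  finally show ?thesis .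
qed

theorem lemma6:
  fixes Z :: "'a set" and \<pi> :: "'a measure" and F :: "('a \<Rightarrow> real) set"
    and a b p :: real and n :: nat
  assumes "prob_space \<pi>" and "space \<pi> = Z"
    and "0 \<le> a" and "a \<le> b"
    and "\<forall>f\<in>F. \<forall>z\<in>Z. f z \<in> {a..b}"
    and "0 < p" and "p < 1"
    and "n \<ge> 1"
  shows "bounded_difference Z n (\<lambda>X. rR F \<pi> n X p) (\<lambda>i. \<bar>b - a\<bar> / (real n * p))"
  unfolding bounded_difference_def rR_eq_average
proof (intro allI impI abs_average_diff_le)
  fix i x y \<sigma> assume i: "i < n" and xZ: "\<forall>j<n. x j \<in> Z" and "y \<in> Z"
    and \<sigma>: "\<sigma> \<in> sign_vectors n"
  have bdd: "bdd_above ((\<lambda>f. rel_correlation \<pi> n X p \<sigma> f) ` F)" if "\<forall>j<n. X j \<in> Z" for X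
  proof (rule bdd_aboveI2)
    fix f assume "f \<in> F"
    then show "rel_correlation \<pi> n X p \<sigma> f \<le> b / p"
      using that assms(3,5,6,8) abs_sign_vector[OF \<sigma>]
      by (intro abs_le_D1[OF abs_rel_correlation_le]) force+
  qed
  show "\<bar>(SUP f\<in>F. rel_correlation \<pi> n x p \<sigma> f) - (SUP f\<in>F. rel_correlation \<pi> n (x(i := y)) p \<sigma> f)\<bar>
          \<le> \<bar>b - a\<bar> / (real n * p)"
  proof (rule abs_cSUP_diff_le[OF bdd bdd])
    fix f assume "f \<in> F"
    then have "f (x i) \<in> {a..b}" "f y \<in> {a..b}"
      using assms(5) xZ i \<open>y \<in> Z\<close> by auto
    then show "\<bar>rel_correlation \<pi> n x p \<sigma> f - rel_correlation \<pi> n (x(i := y)) p \<sigma> f\<bar>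
                 \<le> \<bar>b - a\<bar> / (real n * p)"
      using i assms(6) abs_sign_vector[OF \<sigma> i]
      by (intro abs_rel_correlation_upd_diff_le) (auto simp: abs_le_iff)
  qed (use xZ \<open>y \<in> Z\<close> assms(6) in auto)
qed (use assms(6) in simp)

end
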